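(* Let $X,Y$ be infinite-dimensional Hilbert spaces, suppose Assumption A and the source condition of the context hold, put $r:=\frac{2a+2}{a}$, and fix constants $k,l\in(1,\infty)$. Then there exist constants $C,\delta_0>0$ such that, whenever $\delta\le\delta_0$, $\|f^\delta-f^\dagger\|\le\delta$ and case (b) of the discrepancy principle applies, the regularization parameter $\alpha_\ast$ chosen by the discrepancy principle satisfies $$\alpha_\ast\ge C\,\delta^r(-\ln(c\delta))^{\kappa r}.$$
   Context: Let $B:\mathcal{D}(B)\subset X\to X$ be a densely defined, selfadjoint, unbounded linear operator with $\|Bu\|\ge m\|u\|$ for all $u\in\mathcal{D}(B)$, some $m>0$. Hilbert scale: $X_\tau=\mathcal{D}(B^\tau)$ for $\tau>0$, $X_\tau=X$ for $\tau\le0$, with $\|u\|_\tau=\|B^\tau u\|$. $F:\mathcal{D}(F)\subset X\to Y$ a (nonlinear) operator, $u^\dagger\in\mathcal{D}(F)$, $Fu^\dagger=f^\dagger$, $\overline{u}$ an initial guess. $T_\alpha^\delta(u)=\|Fu-f^\delta\|^2+\alpha\|u-\overline{u}\|_1^2$ ($=+\infty$ if $u\notin X_1$); $u_\alpha^\delta$ denotes a minimizer of $T_\alpha^\delta$ over $\mathcal{D}(F)$. Assumption A: (a) $F$ is sequentially continuous on $\mathcal{D}(F)$ w.r.t. the weak topologies of $X$ and $Y$; (b) $\mathcal{D}(F)$ is closed and convex; (c) $\mathcal{D}:=\mathcal{D}(F)\cap X_1\neq\emptyset$ and $\overline{u}\in\mathcal{D}$; (d) $u^\dagger$ is an interior point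 of $\mathcal{D}(F)$; (e) $\|f^\delta-f^\dagger\|\le\delta$; (f) there are $a>0$ and $0<c_a\le C_a<\infty$ with $c_a\|u-u^\dagger\|_{-a}\le\|Fu-f^\dagger\|\le C_a\|u-u^\dagger\|_{-a}$ for all $u\in\mathcal{D}$. Source condition: $G:=B^{-(2a+2)}$; $\kappa>0$, $c\in(0,\|G\|^{-1})$, $\varphi(t)=(-\ln(ct))^{-\kappa}$ on $(0,\|G\|]$; $u^\dagger-\overline{u}=\varphi(G)w$ with $w\in X$, $\|w\|\le\rho$, $\rho>0$. Discrepancy principle (constants $k,l>1$): (a) if $\|F\overline{u}-f^\delta\|\le k\delta$, set $u_{\alpha_\ast}^\delta:=\overline{u}$ ($\alpha_\ast=\infty$); (b) if $\|F\overline{u}-f^\delta\|>k\delta$, choose $\alpha_\ast\in(0,\infty)$ such that $\|Fu_{\alpha_\ast}^\delta-f^\delta\|\le k\delta\le\|Fu_{\gamma_\ast}^\delta-f^\delta\|$ for some $\gamma_\ast\in[\alpha_\ast,l\alpha_\ast]$. *)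

theory Defs
  imports "HOL-Analysis.Analysis"
begin

definition infinite_dim :: "'a::real_vector set \<Rightarrow> bool" where
  "infinite_dim V \<longleftrightarrow> \<not> (\<exists>S. finite S \<and> S \<subseteq> V \<and> span S = V)"

definition weak_conv :: "(nat \<Rightarrow> 'a::real_inner) \<Rightarrow> 'a \<Rightarrow> bool" where
  "weak_conv xs x \<longleftrightarrow> (\<forall>y. (\<lambda>n. inner (xs n) y) \<longlonglongrightarrow> inner x y)"

definition weakly_seq_cont_on :: "'a::real_inner set \<Rightarrow> ('a \<Rightarrow> 'b::real_inner) \<Rightarrow> bool" where
  "weakly_seq_cont_on S F \<longleftrightarrow>
     (\<forall>xs x. (\<forall>n. xs n \<in> S) \<longrightarrow> x \<in> S \<longrightarrow> weak_conv xs x \<longrightarrow> weak_conv (\<lambda>n. F (xs n)) (F x))"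

text \<open>Densely defined selfadjoint linear operator with domain D (B* = B, D(B* ) = D(B)).\<close>
definition selfadjoint_op :: "'a::real_inner set \<Rightarrow> ('a \<Rightarrow> 'a) \<Rightarrow> bool" where
  "selfadjoint_op D B \<longleftrightarrow>
     subspace D \<and>
     (\<forall>x\<in>D. \<forall>y\<in>D. B (x + y) = B x + B y) \<and>
     (\<forall>c. \<forall>x\<in>D. B (c *\<^sub>R x) = c *\<^sub>R B x) \<and>
     closure D = UNIV \<and>
     (\<forall>v z. (\<forall>u\<in>D. inner (B u) v = inner u z) \<longleftrightarrow> (v \<in> D \<and> z = B v))"

definition unbounded_op :: "'a::real_normed_vector set \<Rightarrow> ('a \<Rightarrow> 'a) \<Rightarrow> bool" where
  "unbounded_op D B \<longleftrightarrow> \<not> (\<exists>K. \<forall>u\<in>D. norm (B u) \<le> K * norm u)"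

definition sq_int :: "'w measure \<Rightarrow> ('w \<Rightarrow> real) \<Rightarrow> bool" where
  "sq_int M f \<longleftrightarrow> f \<in> borel_measurable M \<and> integrable M (\<lambda>\<omega>. (f \<omega>)\<^sup>2)"

text \<open>Spectral (multiplication-operator) representation of (D,B): U is a unitary map
  X \<rightarrow> L^2(M) and B corresponds to multiplication by lam.\<close>
definition spectral_rep ::
  "'w measure \<Rightarrow> ('w \<Rightarrow> real) \<Rightarrow> ('a::real_inner \<Rightarrow> 'w \<Rightarrow> real) \<Rightarrow> 'a set \<Rightarrow> ('a \<Rightarrow> 'a) \<Rightarrow> bool" where
  "spectral_rep M lam U D B \<longleftrightarrow>
     lam \<in> borel_measurable M \<and>
     (\<forall>x. sq_int M (U x)) \<and>
     (\<forall>x y \<omega>. U (x + y) \<omega> = U x \<omega> + U y \<omega>) \<and>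
     (\<forall>c x \<omega>. U (c *\<^sub>R x) \<omega> = c * U x \<omega>) \<and>
     (\<forall>x. (norm x)\<^sup>2 = (\<integral>\<omega>. (U x \<omega>)\<^sup>2 \<partial>M)) \<and>
     (\<forall>f. sq_int M f \<longrightarrow> (\<exists>x. AE \<omega> in M. U x \<omega> = f \<omega>)) \<and>
     (\<forall>u. u \<in> D \<longleftrightarrow> sq_int M (\<lambda>\<omega>. lam \<omega> * U u \<omega>)) \<and>
     (\<forall>u\<in>D. AE \<omega> in M. U (B u) \<omega> = lam \<omega> * U u \<omega>)"

text \<open>Hilbert scale norm \<parallel>u\<parallel>_tau = \<parallel>B^tau u\<parallel> via the functional calculus (used for tau \<le> 0).\<close>
definition hs_norm :: "'w measure \<Rightarrow> ('w \<Rightarrow> real) \<Rightarrow> ('a \<Rightarrow> 'w \<Rightarrow> real) \<Rightarrow> real \<Rightarrow> 'a \<Rightarrow> real" where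
  "hs_norm M lam U tau u = sqrt (\<integral>\<omega>. (\<bar>lam \<omega>\<bar> powr tau * U u \<omega>)\<^sup>2 \<partial>M)"

text \<open>Operator norm of G = B^(-(2a+2)).\<close>
definition G_norm :: "'w measure \<Rightarrow> ('w \<Rightarrow> real) \<Rightarrow> ('a::real_normed_vector \<Rightarrow> 'w \<Rightarrow> real) \<Rightarrow> real \<Rightarrow> real" where
  "G_norm M lam U a = Sup {hs_norm M lam U (-(2*a+2)) u | u. norm u \<le> 1}"

definition phi_log :: "real \<Rightarrow> real \<Rightarrow> real \<Rightarrow> real" where
  "phi_log c \<kappa> t = (- ln (c * t)) powr (- \<kappa>)"

text \<open>Tikhonov functional T_alpha^delta(u) for u \<in> X_1 (it is +\<infinity> outside X_1).\<close>
definition tik :: "('a \<Rightarrow> 'a::real_normed_vector) \<Rightarrow> ('a \<Rightarrow> 'b::real_normed_vector) \<Rightarrow> 'b \<Rightarrow> 'a \<Rightarrow> real \<Rightarrow> 'a \<Rightarrow> real" where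
  "tik B F fd ubar \<alpha> u = (norm (F u - fd))\<^sup>2 + \<alpha> * (norm (B (u - ubar)))\<^sup>2"

definition is_tik_min :: "'a set \<Rightarrow> 'a set \<Rightarrow> ('a \<Rightarrow> 'a::real_normed_vector) \<Rightarrow> ('a \<Rightarrow> 'b::real_normed_vector) \<Rightarrow> 'b \<Rightarrow> 'a \<Rightarrow> real \<Rightarrow> 'a \<Rightarrow> bool" where
  "is_tik_min DF DB B F fd ubar \<alpha> u \<longleftrightarrow>
     u \<in> DF \<inter> DB \<and> (\<forall>v \<in> DF \<inter> DB. tik B F fd ubar \<alpha> u \<le> tik B F fd ubar \<alpha> v)"

definition dp_case_b :: "'a set \<Rightarrow> 'a set \<Rightarrow> ('a \<Rightarrow> 'a::real_normed_vector) \<Rightarrow> ('a \<Rightarrow> 'b::real_normed_vector) \<Rightarrow> 'b \<Rightarrow> 'a \<Rightarrow> real \<Rightarrow> real \<Rightarrow> real \<Rightarrow> real \<Rightarrow> bool" where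
  "dp_case_b DF DB B F fd ubar k l \<delta> \<alpha> \<longleftrightarrow>
     0 < \<alpha> \<and>
     (\<exists>u. is_tik_min DF DB B F fd ubar \<alpha> u \<and> norm (F u - fd) \<le> k * \<delta>) \<and>
     (\<exists>\<gamma>\<in>{\<alpha>..l*\<alpha>}. \<exists>v. is_tik_min DF DB B F fd ubar \<gamma> v \<and> k * \<delta> \<le> norm (F v - fd))"

end

(* Compare the Tikhonov minimizers with a spectral truncation of the exact solution.  Cutting
   udag - ubar off at spectral level R yields v with
     ||v - udag||_{-a} <= R^(-a) phi(R^(-(2a+2))) rho   and   ||B (v - ubar)|| = O(R phi(R^(-(2a+2))) rho).
   For the level R(delta) at which the first bound is a small multiple of delta, v has residual
   q delta < k delta.  Comparing the Tikhonov functional at the parameter gamma in [alpha, l alpha],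
   whose minimizer still has residual >= k delta, with its value at v gives
     alpha >= (k^2 - q^2) delta^2 / (l ||B (v - ubar)||^2),
   and the right-hand side is of order delta^r (-ln (c delta))^(kappa r).
   Spectral values below a fixed level R0, where the logarithmic profile need be neither defined
   nor monotone, are estimated through ||udag - ubar|| directly.  The remaining structural hypotheses only serve the existence of minimizers, which
   dp_case_b already provides. *)

theory Submission imports Defs "HOL-Real_Asymp.Real_Asymp" begin

lemma phi_log_mono:
  assumes "0 < s" "s \<le> t" "0 < c" "c * t < 1" "0 \<le> \<kappa>"
  shows "phi_log c \<kappa> s \<le> phi_log c \<kappa> t"
proof -
  have "0 < - ln (c * t)" using assms by (simp add: ln_less_zero)
  moreover have "ln (c * s) \<le> ln (c * t)" using assms by simp
  ultimately show ?thesis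
    unfolding phi_log_def using assms(5) by (intro powr_mono2') auto
qed

lemma mult_phi_log_powr_mono:
  assumes "0 < x" "x \<le> y" "0 < p" "0 < c" "0 < \<kappa>"
    and large: "\<kappa> * p \<le> - ln (c * x powr (-p))"
  shows "x * phi_log c \<kappa> (x powr (-p)) \<le> y * phi_log c \<kappa> (y powr (-p))"
proof -
  (* With L t = -ln (c t^(-p)) the claim reads kappa (ln Ly - ln Lx) <= ln y - ln x = (Ly - Lx)/p,
     and ln has slope at most 1/Lx <= 1/(kappa p) above Lx. *)
  have L: "- ln (c * t powr (-p)) = p * ln t - ln c" if "0 < t" for t
    using that assms by (simp add: ln_mult ln_powr)
  define Lx Ly where "Lx = p * ln x - ln c" and "Ly = p * ln y - ln c"
  have "\<kappa> * p \<le> Lx" using large L assms by (simp add: Lx_def)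
  moreover have "0 < \<kappa> * p" using assms by simp
  ultimately have Lx_pos: "0 < Lx" by linarith
  have gap: "Ly - Lx = p * (ln y - ln x)" by (simp add: Lx_def Ly_def algebra_simps)
  have "Lx \<le> Ly" using assms by (simp add: Lx_def Ly_def mult_left_mono)
  have "\<kappa> * (ln Ly - ln Lx) \<le> \<kappa> * ((Ly - Lx) / Lx)"
    using ln_diff_le[of Ly Lx] Lx_pos \<open>Lx \<le> Ly\<close> assms by (intro mult_left_mono) auto
  also have "\<dots> \<le> (Ly - Lx) / p"
  proof -
    have "\<kappa> * p * (Ly - Lx) \<le> Lx * (Ly - Lx)"
      using \<open>\<kappa> * p \<le> Lx\<close> \<open>Lx \<le> Ly\<close> by (intro mult_right_mono) auto
    thus ?thesis using Lx_pos assms by (simp add: field_simps)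
  qed
  also have "\<dots> = ln y - ln x" using gap assms by simp
  finally have "exp (ln x - \<kappa> * ln Lx) \<le> exp (ln y - \<kappa> * ln Ly)"
    by (simp add: right_diff_distrib)
  moreover have "exp (ln t - \<kappa> * ln L) = t * L powr (-\<kappa>)" if "0 < t" "0 < L" for t L
    using that by (simp add: powr_def exp_diff exp_minus field_simps)
  ultimately have "x * Lx powr (-\<kappa>) \<le> y * Ly powr (-\<kappa>)"
    using assms Lx_pos \<open>Lx \<le> Ly\<close> by simp
  thus ?thesis using assms by (simp add: phi_log_def L Lx_def Ly_def)
qed

lemma abs_le_mult_abs_imp_power2_le:
  fixes a b K :: real
  assumes "\<bar>a\<bar> \<le> K * \<bar>b\<bar>"
  shows "a\<^sup>2 \<le> K\<^sup>2 * b\<^sup>2"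
  using power_mono[OF assms abs_ge_zero, of 2] by (simp add: power_mult_distrib)

lemma eventually_at_right_0_imp_interval:
  assumes "\<forall>\<^sub>F x in at_right (0::real). P x"
  obtains d where "0 < d" "\<And>x. 0 < x \<Longrightarrow> x \<le> d \<Longrightarrow> P x"
proof -
  obtain b where "0 < b" and b: "\<And>y. 0 < y \<Longrightarrow> y < b \<Longrightarrow> P y"
    using assms by (auto simp: eventually_at_right_field)
  show ?thesis using \<open>0 < b\<close> b by (intro that[of "b/2"]) auto
qed

(* The cut-off level R(delta), solving R^(-a) (-ln (c delta))^(-kappa) = delta / K. *)
definition log_radius :: "real \<Rightarrow> real \<Rightarrow> real \<Rightarrow> real \<Rightarrow> real \<Rightarrow> real" where
  "log_radius a c \<kappa> K \<delta> = (K * (- ln (c * \<delta>)) powr (-\<kappa>) / \<delta>) powr (1/a)"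

lemma log_radius_identities:
  fixes a c \<kappa> K \<delta> :: real
  assumes "0 < \<delta>" "0 < - ln (c * \<delta>)" "0 < K" "0 < a"
  defines "R \<equiv> log_radius a c \<kappa> K \<delta>" and "\<Lambda> \<equiv> - ln (c * \<delta>)"
  shows "R powr (-a) * \<Lambda> powr (-\<kappa>) = \<delta> / K"
    and "\<delta> powr ((2*a+2)/a) * \<Lambda> powr (\<kappa> * ((2*a+2)/a)) * (R * \<Lambda> powr (-\<kappa>))\<^sup>2
           = K powr (2/a) * \<delta>\<^sup>2"
proof -
  have "0 < \<Lambda>" "0 < R" using assms by (simp_all add: log_radius_def)
  have ln_R: "ln R = (ln K - \<kappa> * ln \<Lambda> - ln \<delta>) / a"
    using assms \<open>0 < \<Lambda>\<close> by (simp add: log_radius_def ln_powr ln_mult ln_div)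
  have "ln (R powr (-a) * \<Lambda> powr (-\<kappa>)) = ln (\<delta> / K)"
    using assms(1,3,4) \<open>0 < \<Lambda>\<close> \<open>0 < R\<close> by (simp add: ln_mult ln_powr ln_div ln_R field_simps)
  thus "R powr (-a) * \<Lambda> powr (-\<kappa>) = \<delta> / K"
    using assms(1,3) \<open>0 < \<Lambda>\<close> \<open>0 < R\<close> by simp
  have "ln (\<delta> powr ((2*a+2)/a) * \<Lambda> powr (\<kappa> * ((2*a+2)/a)) * (R * \<Lambda> powr (-\<kappa>))\<^sup>2)
        = ln (K powr (2/a) * \<delta>\<^sup>2)"
    using assms(1,3,4) \<open>0 < \<Lambda>\<close> \<open>0 < R\<close> by (simp add: ln_mult ln_powr ln_realpow ln_R field_simps)
  thus "\<delta> powr ((2*a+2)/a) * \<Lambda> powr (\<kappa> * ((2*a+2)/a)) * (R * \<Lambda> powr (-\<kappa>))\<^sup>2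
           = K powr (2/a) * \<delta>\<^sup>2"
    using assms(1,3) \<open>0 < \<Lambda>\<close> \<open>0 < R\<close> by simp
qed

lemma eventually_log_radius:
  assumes "0 < a" "a < p" "0 < c" "0 < \<kappa>" "0 < K"
  shows "\<forall>\<^sub>F \<delta> in at_right 0. log_radius a c \<kappa> K \<delta> powr (-p) \<le> \<delta>"
    and "filterlim (\<lambda>\<delta>. log_radius a c \<kappa> K \<delta> * (- ln (c * \<delta>)) powr (-\<kappa>)) at_top (at_right 0)"
proof -
  have "1 < p / a" using assms by simp
  have "\<forall>\<^sub>F \<delta> in at_right 0. (K * (- ln (c * \<delta>)) powr (-\<kappa>) / \<delta>) powr (-(p/a)) \<le> \<delta>"
    using assms \<open>1 < p / a\<close> by real_asymp
  thus "\<forall>\<^sub>F \<delta> in at_right 0. log_radius a c \<kappa> K \<delta> powr (-p) \<le> \<delta>"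
    by (simp add: log_radius_def powr_powr)
  show "filterlim (\<lambda>\<delta>. log_radius a c \<kappa> K \<delta> * (- ln (c * \<delta>)) powr (-\<kappa>)) at_top (at_right 0)"
    unfolding log_radius_def using assms by real_asymp
qed

lemma spectral_rep_diff:
  assumes "spectral_rep M lam U D B"
  shows "U (x - y) \<omega> = U x \<omega> - U y \<omega>"
proof -
  have "U (x + (-1) *\<^sub>R y) \<omega> = U x \<omega> + (-1) * U y \<omega>"
    using assms unfolding spectral_rep_def by (simp only:)
  thus ?thesis by simp
qed

lemma spectral_rep_integral_square_le:
  assumes spec: "spectral_rep M lam U D B" and "0 \<le> A" "0 \<le> A'"
    and bound: "AE \<omega> in M. (f \<omega>)\<^sup>2 \<le> A * (U x \<omega>)\<^sup>2 + A' * (U y \<omega>)\<^sup>2"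
  shows "(\<integral>\<omega>. (f \<omega>)\<^sup>2 \<partial>M) \<le> A * (norm x)\<^sup>2 + A' * (norm y)\<^sup>2"
proof -
  have sq_int: "integrable M (\<lambda>\<omega>. (U z \<omega>)\<^sup>2)" for z
    using spec unfolding spectral_rep_def sq_int_def by blast
  have norm_sq: "(norm z)\<^sup>2 = (\<integral>\<omega>. (U z \<omega>)\<^sup>2 \<partial>M)" for z
    using spec unfolding spectral_rep_def by blast
  have "(\<integral>\<omega>. (f \<omega>)\<^sup>2 \<partial>M) \<le> (\<integral>\<omega>. A * (U x \<omega>)\<^sup>2 + A' * (U y \<omega>)\<^sup>2 \<partial>M)"
    using bound sq_int assms by (intro integral_mono_AE') auto
  also have "\<dots> = A * (norm x)\<^sup>2 + A' * (norm y)\<^sup>2"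
    using sq_int by (simp add: norm_sq)
  finally show ?thesis .
qed

lemma spectral_rep_norm_le:
  assumes spec: "spectral_rep M lam U D B" and "0 \<le> K"
    and "AE \<omega> in M. \<bar>U x \<omega>\<bar> \<le> K * \<bar>U y \<omega>\<bar>"
  shows "norm x \<le> K * norm y"
proof -
  have "AE \<omega> in M. (U x \<omega>)\<^sup>2 \<le> K\<^sup>2 * (U y \<omega>)\<^sup>2 + 0 * (U y \<omega>)\<^sup>2"
    using assms(3) by eventually_elim (simp add: abs_le_mult_abs_imp_power2_le)
  from spectral_rep_integral_square_le[OF spec _ _ this]
  have "(norm x)\<^sup>2 \<le> (K * norm y)\<^sup>2"
    using spec unfolding spectral_rep_def by (simp add: power_mult_distrib)
  thus ?thesis using \<open>0 \<le> K\<close> by (simp add: power2_le_iff_abs_le)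
qed

lemma spectral_rep_hs_norm_le:
  assumes spec: "spectral_rep M lam U D B" and "0 \<le> K"
    and "AE \<omega> in M. \<bar>\<bar>lam \<omega>\<bar> powr \<tau> * U x \<omega>\<bar> \<le> K * \<bar>U y \<omega>\<bar>"
  shows "hs_norm M lam U \<tau> x \<le> K * norm y"
proof -
  have "AE \<omega> in M. (\<bar>lam \<omega>\<bar> powr \<tau> * U x \<omega>)\<^sup>2 \<le> K\<^sup>2 * (U y \<omega>)\<^sup>2 + 0 * (U y \<omega>)\<^sup>2"
    using assms(3) by eventually_elim (simp add: abs_le_mult_abs_imp_power2_le)
  from spectral_rep_integral_square_le[OF spec _ _ this]
  have "(hs_norm M lam U \<tau> x)\<^sup>2 \<le> (K * norm y)\<^sup>2"
    unfolding hs_norm_def by (simp add: power_mult_distrib)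
  thus ?thesis using \<open>0 \<le> K\<close> by (simp add: power2_le_iff_abs_le)
qed

lemma spectral_rep_cutoff:
  assumes spec: "spectral_rep M lam U D B"
  obtains z where "z \<in> D" "AE \<omega> in M. U z \<omega> = (if \<bar>lam \<omega>\<bar> \<le> R then U x \<omega> else 0)"
proof -
  have lam_meas: "lam \<in> borel_measurable M"
    and U_meas: "\<And>y. U y \<in> borel_measurable M"
    and U_sq: "\<And>y. integrable M (\<lambda>\<omega>. (U y \<omega>)\<^sup>2)"
    and onto: "\<And>f. sq_int M f \<Longrightarrow> \<exists>y. AE \<omega> in M. U y \<omega> = f \<omega>"
    and dom: "\<And>u. u \<in> D \<longleftrightarrow> sq_int M (\<lambda>\<omega>. lam \<omega> * U u \<omega>)"
    using spec unfolding spectral_rep_def sq_int_def by auto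
  define f where "f = (\<lambda>\<omega>. if \<bar>lam \<omega>\<bar> \<le> R then U x \<omega> else 0)"
  have f_meas: "f \<in> borel_measurable M" unfolding f_def using lam_meas U_meas by measurable
  have "sq_int M f"
    unfolding sq_int_def using f_meas
    by (auto intro: Bochner_Integration.integrable_bound[OF U_sq[of x]] simp: f_def)
  then obtain z where z: "AE \<omega> in M. U z \<omega> = f \<omega>" using onto by blast
  have "AE \<omega> in M. norm ((lam \<omega> * U z \<omega>)\<^sup>2) \<le> norm (R\<^sup>2 * (U x \<omega>)\<^sup>2)"
    using z
  proof eventually_elim
    case (elim \<omega>)
    have "\<bar>lam \<omega>\<bar> \<le> R \<Longrightarrow> (lam \<omega>)\<^sup>2 * (U x \<omega>)\<^sup>2 \<le> R\<^sup>2 * (U x \<omega>)\<^sup>2"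
      using power_mono[of "\<bar>lam \<omega>\<bar>" R 2] by (intro mult_right_mono) auto
    thus ?case using elim by (simp add: f_def power_mult_distrib)
  qed
  hence "z \<in> D"
    unfolding dom sq_int_def using lam_meas U_meas U_sq[of x]
    by (auto intro: Bochner_Integration.integrable_bound[where f = "\<lambda>\<omega>. R\<^sup>2 * (U x \<omega>)\<^sup>2"])
  with z show ?thesis using that unfolding f_def by blast
qed

lemma spectral_rep_tail_le:
  assumes spec: "spectral_rep M lam U D B"
    and tail: "AE \<omega> in M. U x \<omega> = (if \<bar>lam \<omega>\<bar> \<le> R then 0 else g \<omega> * U w \<omega>)"
    and g: "\<And>\<omega>. R < \<bar>lam \<omega>\<bar> \<Longrightarrow> \<bar>g \<omega>\<bar> \<le> \<psi>" and "0 \<le> \<psi>" "0 < R" "0 \<le> a"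
  shows "norm x \<le> \<psi> * norm w"
    and "hs_norm M lam U (-a) x \<le> R powr (-a) * \<psi> * norm w"
proof -
  show "norm x \<le> \<psi> * norm w"
  proof (rule spectral_rep_norm_le[OF spec \<open>0 \<le> \<psi>\<close>])
    show "AE \<omega> in M. \<bar>U x \<omega>\<bar> \<le> \<psi> * \<bar>U w \<omega>\<bar>"
      using tail
    proof eventually_elim
      case (elim \<omega>)
      show ?case using g[of \<omega>] \<open>0 \<le> \<psi>\<close> by (simp add: elim abs_mult mult_right_mono)
    qed
  qed
  have "0 \<le> R powr (-a) * \<psi>" using \<open>0 \<le> \<psi>\<close> by simp
  then show "hs_norm M lam U (-a) x \<le> R powr (-a) * \<psi> * norm w"
  proof (rule spectral_rep_hs_norm_le[OF spec])
    show "AE \<omega> in M. \<bar>\<bar>lam \<omega>\<bar> powr (-a) * U x \<omega>\<bar> \<le> R powr (-a) * \<psi> * \<bar>U w \<omega>\<bar>"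
      using tail
    proof eventually_elim
      case (elim \<omega>)
      have "R < \<bar>lam \<omega>\<bar> \<Longrightarrow> \<bar>lam \<omega>\<bar> powr (-a) * \<bar>g \<omega>\<bar> \<le> R powr (-a) * \<psi>"
        using g[of \<omega>] \<open>0 \<le> \<psi>\<close> \<open>0 < R\<close> \<open>0 \<le> a\<close> by (intro mult_mono powr_mono2') auto
      thus ?case using \<open>0 \<le> R powr (-a) * \<psi>\<close>
        by (simp add: elim abs_mult mult_right_mono flip: mult.assoc)
    qed
  qed
qed

lemma spectral_rep_cutoff_energy_le:
  assumes spec: "spectral_rep M lam U D B" and "z \<in> D"
    and z: "AE \<omega> in M. U z \<omega> = (if \<bar>lam \<omega>\<bar> \<le> R then U e \<omega> else 0)"
    and e: "AE \<omega> in M. U e \<omega> = g \<omega> * U w \<omega>"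
    and g: "\<And>\<omega>. R0 < \<bar>lam \<omega>\<bar> \<Longrightarrow> \<bar>lam \<omega>\<bar> \<le> R \<Longrightarrow> \<bar>lam \<omega> * g \<omega>\<bar> \<le> K" and "0 \<le> R0"
  shows "(norm (B z))\<^sup>2 \<le> R0\<^sup>2 * (norm e)\<^sup>2 + K\<^sup>2 * (norm w)\<^sup>2"
proof -
  have "(norm (B z))\<^sup>2 = (\<integral>\<omega>. (U (B z) \<omega>)\<^sup>2 \<partial>M)"
    using spec unfolding spectral_rep_def by blast
  also have "\<dots> \<le> R0\<^sup>2 * (norm e)\<^sup>2 + K\<^sup>2 * (norm w)\<^sup>2"
  proof (rule spectral_rep_integral_square_le[OF spec])
    have "AE \<omega> in M. U (B z) \<omega> = lam \<omega> * U z \<omega>"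
      using spec \<open>z \<in> D\<close> unfolding spectral_rep_def by blast
    with z e show "AE \<omega> in M. (U (B z) \<omega>)\<^sup>2 \<le> R0\<^sup>2 * (U e \<omega>)\<^sup>2 + K\<^sup>2 * (U w \<omega>)\<^sup>2"
    proof eventually_elim
      case (elim \<omega>)
      consider "\<bar>lam \<omega>\<bar> \<le> R0" | "R0 < \<bar>lam \<omega>\<bar>" "\<bar>lam \<omega>\<bar> \<le> R" | "R < \<bar>lam \<omega>\<bar>"
        by linarith
      thus ?case
      proof cases
        case 1
        hence "(lam \<omega> * U e \<omega>)\<^sup>2 \<le> R0\<^sup>2 * (U e \<omega>)\<^sup>2"
          by (intro abs_le_mult_abs_imp_power2_le) (simp add: abs_mult mult_right_mono)
        thus ?thesis using 1 \<open>0 \<le> R0\<close> elim by (simp add: add_increasing2)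
      next
        case 2
        hence "(lam \<omega> * U e \<omega>)\<^sup>2 \<le> K\<^sup>2 * (U w \<omega>)\<^sup>2"
          using g[OF 2] by (intro abs_le_mult_abs_imp_power2_le)
            (simp add: elim abs_mult mult_right_mono flip: mult.assoc)
        thus ?thesis using 2 elim by (simp add: add_increasing)
      qed (use elim in simp)
    qed
  qed simp_all
  finally show ?thesis .
qed

lemma source_cutoff_approximation:
  fixes U :: "'x::real_inner \<Rightarrow> 'w \<Rightarrow> real"
  assumes spec: "spectral_rep M lam U D B" and D: "subspace D" "ubar \<in> D"
    and source: "AE \<omega> in M. U (udag - ubar) \<omega> = phi_log c \<kappa> (\<bar>lam \<omega>\<bar> powr (-p)) * U w \<omega>"
    and pos: "0 < p" "0 < \<kappa>" "0 < c" "0 \<le> a"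
    and R0: "0 < R0" "\<kappa> * p \<le> - ln (c * R0 powr (-p))"
    and R: "0 < R" "c * R powr (-p) < 1"
  defines "\<psi> \<equiv> phi_log c \<kappa> (R powr (-p))"
  obtains v where "v \<in> D"
    and "norm (v - udag) \<le> \<psi> * norm w"
    and "hs_norm M lam U (-a) (v - udag) \<le> R powr (-a) * \<psi> * norm w"
    and "(norm (B (v - ubar)))\<^sup>2 \<le> R0\<^sup>2 * (norm (udag - ubar))\<^sup>2 + (R * \<psi>)\<^sup>2 * (norm w)\<^sup>2"
proof -
  define \<phi> where "\<phi> t = phi_log c \<kappa> (\<bar>t\<bar> powr (-p))" for t
  have "0 \<le> \<psi>" "0 \<le> \<phi> t" for t by (simp_all add: \<psi>_def \<phi>_def phi_log_def)
  have \<phi>_tail: "\<bar>- \<phi> t\<bar> \<le> \<psi>" if "R < \<bar>t\<bar>" for t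
  proof -
    have "\<phi> t \<le> \<psi>"
      unfolding \<phi>_def \<psi>_def using that pos R by (intro phi_log_mono powr_mono2') auto
    thus ?thesis using \<open>0 \<le> \<phi> t\<close> by simp
  qed
  have \<phi>_middle: "\<bar>t * \<phi> t\<bar> \<le> R * \<psi>" if "R0 < \<bar>t\<bar>" "\<bar>t\<bar> \<le> R" for t
  proof -
    have "c * \<bar>t\<bar> powr (-p) \<le> c * R0 powr (-p)"
      using that pos R0 by (intro mult_left_mono powr_mono2') auto
    hence "- ln (c * R0 powr (-p)) \<le> - ln (c * \<bar>t\<bar> powr (-p))"
      using that pos R0 by simp
    hence "\<kappa> * p \<le> - ln (c * \<bar>t\<bar> powr (-p))" using R0 by linarith
    hence "\<bar>t\<bar> * \<phi> t \<le> R * \<psi>"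
      unfolding \<phi>_def \<psi>_def using that pos R0 by (intro mult_phi_log_powr_mono) auto
    thus ?thesis using \<open>0 \<le> \<phi> t\<close> by (simp add: abs_mult)
  qed
  have e: "AE \<omega> in M. U (udag - ubar) \<omega> = \<phi> (lam \<omega>) * U w \<omega>"
    using source by (simp add: \<phi>_def)
  obtain z where "z \<in> D"
    and z: "AE \<omega> in M. U z \<omega> = (if \<bar>lam \<omega>\<bar> \<le> R then U (udag - ubar) \<omega> else 0)"
    using spectral_rep_cutoff[OF spec] by blast
  define v where "v = ubar + z"
  have "v \<in> D" using D \<open>z \<in> D\<close> by (simp add: v_def subspace_add)
  have "v - udag = z - (udag - ubar)" by (simp add: v_def)
  from z e have "AE \<omega> in M. U (v - udag) \<omega> =
      (if \<bar>lam \<omega>\<bar> \<le> R then 0 else - \<phi> (lam \<omega>) * U w \<omega>)"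
    by eventually_elim (simp add: \<open>v - udag = z - (udag - ubar)\<close> spectral_rep_diff[OF spec])
  note tail = spectral_rep_tail_le[OF spec this \<phi>_tail \<open>0 \<le> \<psi>\<close> R(1) pos(4)]
  have "(norm (B (v - ubar)))\<^sup>2 \<le> R0\<^sup>2 * (norm (udag - ubar))\<^sup>2 + (R * \<psi>)\<^sup>2 * (norm w)\<^sup>2"
    using spectral_rep_cutoff_energy_le[OF spec \<open>z \<in> D\<close> z e \<phi>_middle] R0 by (simp add: v_def)
  with tail show ?thesis using that \<open>v \<in> D\<close> by blast
qed

lemma log_radius_approximation:
  fixes U :: "'x::real_inner \<Rightarrow> 'w \<Rightarrow> real"
  assumes spec: "spectral_rep M lam U D B" and D: "subspace D" "ubar \<in> D"
    and source: "AE \<omega> in M. U (udag - ubar) \<omega> =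
                   phi_log c \<kappa> (\<bar>lam \<omega>\<bar> powr (-(2*a+2))) * U w \<omega>"
    and pos: "0 < a" "0 < \<kappa>" "0 < c" "0 < K" and w: "norm w \<le> \<rho>"
    and R0: "0 < R0" "\<kappa> * (2*a+2) \<le> - ln (c * R0 powr (-(2*a+2)))"
    and \<delta>: "0 < \<delta>" "1 \<le> - ln (c * \<delta>)" "log_radius a c \<kappa> K \<delta> powr (-(2*a+2)) \<le> \<delta>"
    and far: "R0 * norm (udag - ubar) \<le> log_radius a c \<kappa> K \<delta> * (- ln (c * \<delta>)) powr (-\<kappa>) * \<rho>"
  obtains v where "v \<in> D" and "norm (v - udag) \<le> (- ln (c * \<delta>)) powr (-\<kappa>) * \<rho>"
    and "hs_norm M lam U (-a) (v - udag) \<le> \<rho> / K * \<delta>"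
    and "\<delta> powr ((2*a+2)/a) * (- ln (c * \<delta>)) powr (\<kappa> * ((2*a+2)/a)) * (norm (B (v - ubar)))\<^sup>2
           \<le> 2 * \<rho>\<^sup>2 * K powr (2/a) * \<delta>\<^sup>2"
proof -
  define p where "p = 2*a+2"
  define \<Lambda> where "\<Lambda> = - ln (c * \<delta>)"
  define R where "R = log_radius a c \<kappa> K \<delta>"
  define \<psi> where "\<psi> = phi_log c \<kappa> (R powr (-p))"
  have "0 < p" using pos by (simp add: p_def)
  have "0 < \<Lambda>" using \<delta>(2) unfolding \<Lambda>_def by linarith
  hence "0 < R" using pos \<delta>(1) unfolding R_def log_radius_def \<Lambda>_def by simp
  have "ln (c * \<delta>) < 0" using \<delta> by simp
  hence "c * \<delta> < 1" using ln_less_zero_iff[of "c * \<delta>"] \<delta> pos by simp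
  have "R powr (-p) \<le> \<delta>" using \<delta> by (simp add: R_def p_def)
  with \<open>c * \<delta> < 1\<close> have "c * R powr (-p) < 1"
    using mult_left_mono[of "R powr (-p)" \<delta> c] pos by linarith
  have "\<psi> \<le> phi_log c \<kappa> \<delta>"
    unfolding \<psi>_def using \<open>0 < R\<close> \<open>R powr (-p) \<le> \<delta>\<close> \<open>c * \<delta> < 1\<close> pos by (intro phi_log_mono) auto
  hence \<psi>w: "\<psi> * norm w \<le> \<Lambda> powr (-\<kappa>) * \<rho>"
    using w by (intro mult_mono) (auto simp: phi_log_def \<Lambda>_def)
  have "0 \<le> \<psi>" by (simp add: \<psi>_def phi_log_def)
  obtain v where "v \<in> D" and v_near: "norm (v - udag) \<le> \<psi> * norm w"
    and v_hs: "hs_norm M lam U (-a) (v - udag) \<le> R powr (-a) * \<psi> * norm w"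
    and v_B: "(norm (B (v - ubar)))\<^sup>2 \<le> R0\<^sup>2 * (norm (udag - ubar))\<^sup>2 + (R * \<psi>)\<^sup>2 * (norm w)\<^sup>2"
    using source_cutoff_approximation[OF spec D source[folded p_def] \<open>0 < p\<close> pos(2,3)
        less_imp_le[OF pos(1)] R0[folded p_def] \<open>0 < R\<close> \<open>c * R powr (-p) < 1\<close>, folded \<psi>_def]
    by blast
  note radius = log_radius_identities[where \<kappa> = \<kappa>, OF \<delta>(1) \<open>0 < \<Lambda>\<close>[unfolded \<Lambda>_def] pos(4,1),
      folded R_def \<Lambda>_def]
  have "(R * \<psi>)\<^sup>2 * (norm w)\<^sup>2 \<le> (R * \<Lambda> powr (-\<kappa>) * \<rho>)\<^sup>2"
    using \<psi>w \<open>0 < R\<close> \<open>0 \<le> \<psi>\<close> by (simp add: power_mono mult.assoc flip: power_mult_distrib)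
  moreover have "R0\<^sup>2 * (norm (udag - ubar))\<^sup>2 \<le> (R * \<Lambda> powr (-\<kappa>) * \<rho>)\<^sup>2"
    using far R0 by (simp add: power_mono R_def \<Lambda>_def flip: power_mult_distrib)
  ultimately have "(norm (B (v - ubar)))\<^sup>2 \<le> 2 * \<rho>\<^sup>2 * (R * \<Lambda> powr (-\<kappa>))\<^sup>2"
    using v_B by (simp add: power_mult_distrib algebra_simps)
  hence "\<delta> powr ((2*a+2)/a) * \<Lambda> powr (\<kappa> * ((2*a+2)/a)) * (norm (B (v - ubar)))\<^sup>2
      \<le> \<delta> powr ((2*a+2)/a) * \<Lambda> powr (\<kappa> * ((2*a+2)/a)) * (2 * \<rho>\<^sup>2 * (R * \<Lambda> powr (-\<kappa>))\<^sup>2)"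
    by (rule mult_left_mono) simp
  also have "\<dots> = 2 * \<rho>\<^sup>2 * K powr (2/a) * \<delta>\<^sup>2"
    using radius(2) by (simp only: mult_ac)
  finally have B_rate: "\<delta> powr ((2*a+2)/a) * \<Lambda> powr (\<kappa> * ((2*a+2)/a)) * (norm (B (v - ubar)))\<^sup>2
      \<le> 2 * \<rho>\<^sup>2 * K powr (2/a) * \<delta>\<^sup>2" .
  have "R powr (-a) * \<psi> * norm w \<le> R powr (-a) * \<Lambda> powr (-\<kappa>) * \<rho>"
    using mult_left_mono[OF \<psi>w, of "R powr (-a)"] by (simp add: mult.assoc)
  also have "\<dots> = \<rho> / K * \<delta>" using radius(1) by simp
  finally have hs: "hs_norm M lam U (-a) (v - udag) \<le> \<rho> / K * \<delta>" using v_hs by linarith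
  show ?thesis
    using that[OF \<open>v \<in> D\<close> _ hs B_rate[unfolded \<Lambda>_def]] v_near \<psi>w unfolding \<Lambda>_def by linarith
qed

lemma log_source_approximation_rate:
  fixes U :: "'x::real_inner \<Rightarrow> 'w \<Rightarrow> real"
  assumes spec: "spectral_rep M lam U D B" and D: "subspace D" "ubar \<in> D"
    and source: "AE \<omega> in M. U (udag - ubar) \<omega> =
                   phi_log c \<kappa> (\<bar>lam \<omega>\<bar> powr (-(2*a+2))) * U w \<omega>"
    and pos: "0 < a" "0 < \<kappa>" "0 < c" "0 < \<rho>" "0 < \<epsilon>" "0 < r"
    and w: "norm w \<le> \<rho>"
  shows "\<exists>C>0. \<forall>\<^sub>F \<delta> in at_right 0. \<exists>v\<in>D. norm (v - udag) < r \<and>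
           hs_norm M lam U (-a) (v - udag) \<le> \<epsilon> * \<delta> \<and>
           C * \<delta> powr ((2*a+2)/a) * (- ln (c * \<delta>)) powr (\<kappa> * ((2*a+2)/a))
             * (norm (B (v - ubar)))\<^sup>2 \<le> \<delta>\<^sup>2"
proof -
  define K where "K = \<rho> / \<epsilon>"
  define R0 where "R0 = exp (\<kappa> + ln c / (2*a+2))"
  have "0 < K" using pos by (simp add: K_def)
  have R0: "0 < R0" "\<kappa> * (2*a+2) \<le> - ln (c * R0 powr (-(2*a+2)))"
    using pos by (simp_all add: R0_def ln_mult ln_powr field_simps)
  have "\<forall>\<^sub>F \<delta> in at_right 0. 0 < \<delta> \<and> 1 \<le> - ln (c * \<delta>)
      \<and> log_radius a c \<kappa> K \<delta> powr (-(2*a+2)) \<le> \<delta> \<and> (- ln (c * \<delta>)) powr (-\<kappa>) * \<rho> < r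
      \<and> R0 * norm (udag - ubar) / \<rho> \<le> log_radius a c \<kappa> K \<delta> * (- ln (c * \<delta>)) powr (-\<kappa>)"
  proof (intro eventually_conj)
    show "\<forall>\<^sub>F \<delta> in at_right 0. 0 < (\<delta>::real)" by (rule eventually_at_right_less)
    show "\<forall>\<^sub>F \<delta> in at_right 0. 1 \<le> - ln (c * \<delta>)"
      and "\<forall>\<^sub>F \<delta> in at_right 0. (- ln (c * \<delta>)) powr (-\<kappa>) * \<rho> < r"
      using pos by real_asymp+
    show "\<forall>\<^sub>F \<delta> in at_right 0. log_radius a c \<kappa> K \<delta> powr (-(2*a+2)) \<le> \<delta>"
      and "\<forall>\<^sub>F \<delta> in at_right 0.
             R0 * norm (udag - ubar) / \<rho> \<le> log_radius a c \<kappa> K \<delta> * (- ln (c * \<delta>)) powr (-\<kappa>)"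
      using eventually_log_radius[of a "2*a+2" c \<kappa> K] pos \<open>0 < K\<close> by (simp_all add: filterlim_at_top)
  qed
  hence "\<forall>\<^sub>F \<delta> in at_right 0. \<exists>v\<in>D. norm (v - udag) < r \<and>
           hs_norm M lam U (-a) (v - udag) \<le> \<epsilon> * \<delta> \<and>
           \<delta> powr ((2*a+2)/a) * (- ln (c * \<delta>)) powr (\<kappa> * ((2*a+2)/a)) * (norm (B (v - ubar)))\<^sup>2
             \<le> 2 * \<rho>\<^sup>2 * K powr (2/a) * \<delta>\<^sup>2"
  proof eventually_elim
    case (elim \<delta>)
    hence "R0 * norm (udag - ubar) \<le> log_radius a c \<kappa> K \<delta> * (- ln (c * \<delta>)) powr (-\<kappa>) * \<rho>"
      using pos by (simp add: field_simps)
    with elim obtain v where "v \<in> D" "norm (v - udag) \<le> (- ln (c * \<delta>)) powr (-\<kappa>) * \<rho>"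
      "hs_norm M lam U (-a) (v - udag) \<le> \<rho> / K * \<delta>"
      "\<delta> powr ((2*a+2)/a) * (- ln (c * \<delta>)) powr (\<kappa> * ((2*a+2)/a)) * (norm (B (v - ubar)))\<^sup>2
         \<le> 2 * \<rho>\<^sup>2 * K powr (2/a) * \<delta>\<^sup>2"
      using log_radius_approximation[OF spec D source pos(1-3) \<open>0 < K\<close> w R0] by blast
    thus ?case using elim pos by (intro bexI[of _ v]) (auto simp: K_def)
  qed
  moreover have "0 < 2 * \<rho>\<^sup>2 * K powr (2/a)" using pos \<open>0 < K\<close> by simp
  ultimately show ?thesis
    by (intro exI[of _ "1 / (2 * \<rho>\<^sup>2 * K powr (2/a))"]) (auto simp: field_simps)
qed

lemma dp_case_b_residual_gap:
  assumes dp: "dp_case_b DF DB B F fd ubar k l \<delta> \<alpha>" and v: "v \<in> DF \<inter> DB" and "0 \<le> k * \<delta>"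
  shows "(k * \<delta>)\<^sup>2 - (norm (F v - fd))\<^sup>2 \<le> l * \<alpha> * (norm (B (v - ubar)))\<^sup>2"
proof -
  obtain \<gamma> u where "\<alpha> \<le> \<gamma>" "\<gamma> \<le> l * \<alpha>" and u: "is_tik_min DF DB B F fd ubar \<gamma> u"
    and "k * \<delta> \<le> norm (F u - fd)"
    using dp unfolding dp_case_b_def by auto
  have "0 < \<gamma>" using dp \<open>\<alpha> \<le> \<gamma>\<close> by (simp add: dp_case_b_def)
  have "(k * \<delta>)\<^sup>2 \<le> (norm (F u - fd))\<^sup>2"
    using \<open>0 \<le> k * \<delta>\<close> \<open>k * \<delta> \<le> norm (F u - fd)\<close> by (intro power_mono)
  also have "\<dots> \<le> tik B F fd ubar \<gamma> u" using \<open>0 < \<gamma>\<close> by (simp add: tik_def)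
  also have "\<dots> \<le> tik B F fd ubar \<gamma> v" using u v unfolding is_tik_min_def by blast
  also have "\<dots> \<le> (norm (F v - fd))\<^sup>2 + l * \<alpha> * (norm (B (v - ubar)))\<^sup>2"
    unfolding tik_def using \<open>\<gamma> \<le> l * \<alpha>\<close> by (simp add: mult_right_mono)
  finally show ?thesis by simp
qed

lemma dp_case_b_lower_bound:
  assumes dp: "dp_case_b DF DB B F fd ubar k l \<delta> \<alpha>" and v: "v \<in> DF \<inter> DB"
    and "0 < \<delta>" "0 \<le> q" "q < k" and residual: "norm (F v - fd) \<le> q * \<delta>"
    and "0 \<le> C" and penalty: "C * (norm (B (v - ubar)))\<^sup>2 \<le> \<delta>\<^sup>2"
  shows "C * (k\<^sup>2 - q\<^sup>2) / l \<le> \<alpha>"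
proof -
  define N where "N = (norm (B (v - ubar)))\<^sup>2"
  have "0 < \<alpha>" "\<alpha> \<le> l * \<alpha>"
    using dp unfolding dp_case_b_def by (blast, meson atLeastAtMost_iff order_trans)
  hence "0 < l * \<alpha>" "0 < l" by (auto simp: zero_less_mult_iff)
  have "0 < k\<^sup>2 - q\<^sup>2" using \<open>0 \<le> q\<close> \<open>q < k\<close> by (simp add: power_strict_mono)
  have "(norm (F v - fd))\<^sup>2 \<le> (q * \<delta>)\<^sup>2" using residual by (intro power_mono) auto
  hence gap: "(k\<^sup>2 - q\<^sup>2) * \<delta>\<^sup>2 \<le> l * \<alpha> * N"
    using dp_case_b_residual_gap[OF dp v] \<open>0 < \<delta>\<close> \<open>q < k\<close> \<open>0 \<le> q\<close>
    by (simp add: N_def power_mult_distrib left_diff_distrib)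
  moreover have "0 < (k\<^sup>2 - q\<^sup>2) * \<delta>\<^sup>2" using \<open>0 < k\<^sup>2 - q\<^sup>2\<close> \<open>0 < \<delta>\<close> by simp
  ultimately have "0 < l * \<alpha> * N" by linarith
  hence "0 < N" using \<open>0 < l * \<alpha>\<close> by (simp add: zero_less_mult_iff)
  have "C * (k\<^sup>2 - q\<^sup>2) * N \<le> (k\<^sup>2 - q\<^sup>2) * \<delta>\<^sup>2"
    using mult_left_mono[OF penalty, of "k\<^sup>2 - q\<^sup>2"] \<open>0 < k\<^sup>2 - q\<^sup>2\<close> by (simp add: N_def mult_ac)
  with gap have "C * (k\<^sup>2 - q\<^sup>2) * N \<le> l * \<alpha> * N" by linarith
  hence "C * (k\<^sup>2 - q\<^sup>2) \<le> l * \<alpha>" using \<open>0 < N\<close> by (rule mult_right_le_imp_le)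
  thus ?thesis using \<open>0 < l\<close> by (simp add: field_simps)
qed

theorem lemma4p4:
  fixes B :: "'x::{real_inner,complete_space} \<Rightarrow> 'x" and DB :: "'x set" and m :: real
    and M :: "'w measure" and lam :: "'w \<Rightarrow> real" and U :: "'x \<Rightarrow> 'w \<Rightarrow> real"
    and F :: "'x \<Rightarrow> 'y::{real_inner,complete_space}" and DF :: "'x set"
    and udag ubar w :: 'x and fdag :: 'y
    and a \<kappa> c \<rho> k l :: real
  assumes infX: "infinite_dim (UNIV :: 'x set)"
    and infY: "infinite_dim (UNIV :: 'y set)"
    and B_sa: "selfadjoint_op DB B"
    and B_unb: "unbounded_op DB B"
    and m_pos: "m > 0"
    and B_bd: "\<forall>u\<in>DB. norm (B u) \<ge> m * norm u"
    and spec: "spectral_rep M lam U DB B"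
    and A_a: "weakly_seq_cont_on DF F"
    and A_b: "closed DF" "convex DF"
    and A_c: "DF \<inter> DB \<noteq> {}" "ubar \<in> DF \<inter> DB"
    and A_d: "udag \<in> interior DF"
    and fdag: "F udag = fdag"
    and a_pos: "a > 0"
    and A_f: "\<exists>ca Ca. 0 < ca \<and> ca \<le> Ca \<and>
               (\<forall>u\<in>DF \<inter> DB. ca * hs_norm M lam U (-a) (u - udag) \<le> norm (F u - fdag) \<and>
                              norm (F u - fdag) \<le> Ca * hs_norm M lam U (-a) (u - udag))"
    and kappa_pos: "\<kappa> > 0"
    and c_rng: "0 < c" "c < 1 / G_norm M lam U a"
    and rho_pos: "\<rho> > 0"
    and w_bd: "norm w \<le> \<rho>"
    and source: "AE \<omega> in M. U (udag - ubar) \<omega> =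
                   phi_log c \<kappa> (\<bar>lam \<omega>\<bar> powr (-(2*a+2))) * U w \<omega>"
    and k_gt: "k > 1" and l_gt: "l > 1"
  shows "\<exists>C \<delta>0. C > 0 \<and> \<delta>0 > 0 \<and>
           (\<forall>\<delta> fd \<alpha>. 0 < \<delta> \<longrightarrow> \<delta> \<le> \<delta>0 \<longrightarrow> norm (fd - fdag) \<le> \<delta> \<longrightarrow>
              norm (F ubar - fd) > k * \<delta> \<longrightarrow>
              dp_case_b DF DB B F fd ubar k l \<delta> \<alpha> \<longrightarrow>
              \<alpha> \<ge> C * \<delta> powr ((2*a+2)/a) * (- ln (c * \<delta>)) powr (\<kappa> * ((2*a+2)/a)))"
proof -
  obtain ca Ca where "0 < ca" "ca \<le> Ca"
    and F_le: "\<forall>u\<in>DF \<inter> DB. norm (F u - fdag) \<le> Ca * hs_norm M lam U (-a) (u - udag)"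
    using A_f by blast
  obtain r where "0 < r" and ball: "ball udag r \<subseteq> DF" using A_d mem_interior by blast
  define q where "q = (1 + k) / 2"
  have "0 < Ca" "1 < q" "q < k" using \<open>0 < ca\<close> \<open>ca \<le> Ca\<close> k_gt by (auto simp: q_def)
  hence "0 < (q - 1) / Ca" by simp
  have "subspace DB" "ubar \<in> DB" using B_sa A_c unfolding selfadjoint_op_def by auto
  obtain C where "0 < C" and ev: "\<forall>\<^sub>F \<delta> in at_right 0. \<exists>v\<in>DB. norm (v - udag) < r \<and>
           hs_norm M lam U (-a) (v - udag) \<le> (q - 1) / Ca * \<delta> \<and>
           C * \<delta> powr ((2*a+2)/a) * (- ln (c * \<delta>)) powr (\<kappa> * ((2*a+2)/a))
             * (norm (B (v - ubar)))\<^sup>2 \<le> \<delta>\<^sup>2" (is "\<forall>\<^sub>F \<delta> in at_right 0. ?good \<delta>")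
    using log_source_approximation_rate[OF spec \<open>subspace DB\<close> \<open>ubar \<in> DB\<close> source a_pos kappa_pos
        c_rng(1) rho_pos \<open>0 < (q - 1) / Ca\<close> \<open>0 < r\<close> w_bd] by blast
  obtain \<delta>0 where "0 < \<delta>0" and approx: "\<And>\<delta>. 0 < \<delta> \<Longrightarrow> \<delta> \<le> \<delta>0 \<Longrightarrow> ?good \<delta>"
    using eventually_at_right_0_imp_interval[OF ev] by blast
  show ?thesis
  proof (intro exI conjI allI impI)
    show "0 < C * (k\<^sup>2 - q\<^sup>2) / l" using \<open>0 < C\<close> \<open>1 < q\<close> \<open>q < k\<close> l_gt
      by (simp add: power_strict_mono)
    fix \<delta> fd \<alpha>
    assume "0 < \<delta>" "\<delta> \<le> \<delta>0" "norm (fd - fdag) \<le> \<delta>" and dp: "dp_case_b DF DB B F fd ubar k l \<delta> \<alpha>"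
    then obtain v where "v \<in> DB" "norm (v - udag) < r"
      and hs: "hs_norm M lam U (-a) (v - udag) \<le> (q - 1) / Ca * \<delta>"
      and rate: "C * \<delta> powr ((2*a+2)/a) * (- ln (c * \<delta>)) powr (\<kappa> * ((2*a+2)/a))
             * (norm (B (v - ubar)))\<^sup>2 \<le> \<delta>\<^sup>2"
      using approx by blast
    have "v \<in> DF" using ball \<open>norm (v - udag) < r\<close> by (auto simp: dist_norm norm_minus_commute)
    have "norm (F v - fdag) \<le> Ca * hs_norm M lam U (-a) (v - udag)"
      using F_le \<open>v \<in> DF\<close> \<open>v \<in> DB\<close> by blast
    also have "\<dots> \<le> (q - 1) * \<delta>" using mult_left_mono[OF hs, of Ca] \<open>0 < Ca\<close> by simp
    finally have "norm (F v - fd) \<le> q * \<delta>"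
      using norm_triangle_ineq4[of "F v - fdag" "fd - fdag"] \<open>norm (fd - fdag) \<le> \<delta>\<close>
      by (simp add: left_diff_distrib)
    hence "C * \<delta> powr ((2*a+2)/a) * (- ln (c * \<delta>)) powr (\<kappa> * ((2*a+2)/a)) * (k\<^sup>2 - q\<^sup>2) / l \<le> \<alpha>"
      using \<open>v \<in> DF\<close> \<open>v \<in> DB\<close> \<open>0 < \<delta>\<close> \<open>1 < q\<close> \<open>q < k\<close> \<open>0 < C\<close> rate
      by (intro dp_case_b_lower_bound[OF dp]) auto
    thus "C * (k\<^sup>2 - q\<^sup>2) / l * \<delta> powr ((2*a+2)/a) * (- ln (c * \<delta>)) powr (\<kappa> * ((2*a+2)/a)) \<le> \<alpha>"
      by (simp add: field_simps)
  qed (rule \<open>0 < \<delta>0\<close>)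
qed

end
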